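(* Let $n\geq 1$ and $m\geq 2$. The perfect matchings $M_1=E_1\cup E_3\cup\cdots\cup E_{2m-1}$ and $M_2=E_2\cup E_4\cup\cdots\cup E_{2m}$ of $T(2n+1,2m)$ lie in different components of the total resonance graph $R_t(T(2n+1,2m))$.
   Context: $T(2n+1,2m)$ is the graph of the quadriculated torus with $2n+1$ rows and $2m$ columns: vertices $(u_i,v_j)$ for $i\in\mathbb{Z}_{2m}$ (indices $1,\dots,2m$ mod $2m$) and $j\in\mathbb{Z}_{2n+1}$, with $(u_i,v_j)$ adjacent to $(u_{i+1},v_j)$ and to $(u_i,v_{j+1})$; it is cellularly embedded in the torus with faces the $4$-cycles $(u_i,v_j)(u_{i+1},v_j)(u_{i+1},v_{j+1})(u_i,v_{j+1})$. For $1\le i\le 2m$, $E_i=\{(u_i,v_j)(u_{i+1},v_j): 1\le j\le 2n+1\}$ (index $i+1$ mod $2m$). The total resonance graph $R_t(G)$ has the perfect matchings of $G$ as vertices, two perfect matchings $M,M'$ being adjacent iff $M\oplus M'$ is exactly the boundary of one face. *)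

theory Defs
  imports Main
begin

definition cyc_succ :: "nat \<Rightarrow> nat \<Rightarrow> nat" where
  "cyc_succ N i = (if i = N then 1 else i + 1)"

text \<open>Vertex (u_i, v_j) is the pair (i, j), i in 1..2m, j in 1..2n+1.
  Edges are two-element vertex sets.\<close>
definition torus_vertices :: "nat \<Rightarrow> nat \<Rightarrow> (nat \<times> nat) set" where
  "torus_vertices n m = {1..2*m} \<times> {1..2*n+1}"

definition hedge :: "nat \<Rightarrow> nat \<Rightarrow> nat \<Rightarrow> (nat \<times> nat) set" where
  "hedge m i j = {(i, j), (cyc_succ (2*m) i, j)}"

definition vedge :: "nat \<Rightarrow> nat \<Rightarrow> nat \<Rightarrow> (nat \<times> nat) set" where
  "vedge n i j = {(i, j), (i, cyc_succ (2*n+1) j)}"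

definition torus_edges :: "nat \<Rightarrow> nat \<Rightarrow> (nat \<times> nat) set set" where
  "torus_edges n m =
     {hedge m i j | i j. i \<in> {1..2*m} \<and> j \<in> {1..2*n+1}} \<union>
     {vedge n i j | i j. i \<in> {1..2*m} \<and> j \<in> {1..2*n+1}}"

definition E_class :: "nat \<Rightarrow> nat \<Rightarrow> nat \<Rightarrow> (nat \<times> nat) set set" where
  "E_class n m i = {hedge m i j | j. j \<in> {1..2*n+1}}"

definition perfect_matching ::
  "'v set \<Rightarrow> 'v set set \<Rightarrow> 'v set set \<Rightarrow> bool" where
  "perfect_matching V Ed M \<longleftrightarrow> M \<subseteq> Ed \<and> (\<forall>v\<in>V. \<exists>!e. e \<in> M \<and> v \<in> e)"

definition face_boundary :: "nat \<Rightarrow> nat \<Rightarrow> nat \<Rightarrow> nat \<Rightarrow> (nat \<times> nat) set set" where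
  "face_boundary n m i j =
     {hedge m i j, vedge n (cyc_succ (2*m) i) j,
      hedge m i (cyc_succ (2*n+1) j), vedge n i j}"

definition torus_faces :: "nat \<Rightarrow> nat \<Rightarrow> (nat \<times> nat) set set set" where
  "torus_faces n m = {face_boundary n m i j | i j. i \<in> {1..2*m} \<and> j \<in> {1..2*n+1}}"

definition total_resonance_adj ::
  "nat \<Rightarrow> nat \<Rightarrow> (nat \<times> nat) set set \<Rightarrow> (nat \<times> nat) set set \<Rightarrow> bool" where
  "total_resonance_adj n m M M' \<longleftrightarrow>
     perfect_matching (torus_vertices n m) (torus_edges n m) M \<and>
     perfect_matching (torus_vertices n m) (torus_edges n m) M' \<and>
     (\<exists>F \<in> torus_faces n m. (M - M') \<union> (M' - M) = F)"

definition same_component ::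
  "nat \<Rightarrow> nat \<Rightarrow> (nat \<times> nat) set set \<Rightarrow> (nat \<times> nat) set set \<Rightarrow> bool" where
  "same_component n m M M' \<longleftrightarrow> (M, M') \<in> {(A, B). total_resonance_adj n m A B}\<^sup>*"

end

theory Submission
  imports Defs
begin

text \<open>Every face boundary meets a column class \<open>E_k\<close> of horizontal edges in either none or
  two of its edges, so flipping a face preserves the parity of the number of edges of \<open>E_k\<close> in
  a perfect matching. Hence this parity is constant on the components of the total resonance
  graph. But \<open>M\<^sub>1\<close> contains all \<open>2n+1\<close> edges of \<open>E\<^sub>1\<close> and \<open>M\<^sub>2\<close> none of them.\<close>

lemma cyc_succ_neq: "N \<ge> 2 \<Longrightarrow> cyc_succ N j \<noteq> j"
  by (auto simp: cyc_succ_def)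

lemma hedge_neq_vedge: "n \<ge> 1 \<Longrightarrow> hedge m i j \<noteq> vedge n i' j'"
proof
  assume n: "n \<ge> 1" and eq: "hedge m i j = vedge n i' j'"
  have "(i', j') \<in> hedge m i j" "(i', cyc_succ (2*n+1) j') \<in> hedge m i j"
    using eq by (auto simp: vedge_def)
  then have "j' = j" "cyc_succ (2*n+1) j' = j" by (auto simp: hedge_def)
  moreover have "cyc_succ (2*n+1) j' \<noteq> j'" using n by (intro cyc_succ_neq) auto
  ultimately show False by simp
qed

lemma hedge_inj:
  assumes "m \<ge> 2" "i \<in> {1..2*m}" "i' \<in> {1..2*m}" "hedge m i j = hedge m i' j'"
  shows "i = i' \<and> j = j'"
proof -
  have "(i, j) \<in> hedge m i' j'" "(i', j') \<in> hedge m i j"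
    using assms(4) by (auto simp: hedge_def)
  then have "j = j'" "i = i' \<or> i = cyc_succ (2*m) i'" "i' = i \<or> i' = cyc_succ (2*m) i"
    by (auto simp: hedge_def)
  then show ?thesis using assms(1-3) by (auto simp: cyc_succ_def split: if_splits)
qed

lemma E_class_eq_image: "E_class n m k = (\<lambda>j. hedge m k j) ` {1..2*n+1}"
  by (auto simp: E_class_def)

lemma finite_E_class: "finite (E_class n m k)"
  by (simp add: E_class_eq_image)

lemma card_E_class:
  assumes "m \<ge> 2" "k \<in> {1..2*m}"
  shows "card (E_class n m k) = 2*n+1"
proof -
  have "inj_on (\<lambda>j. hedge m k j) {1..2*n+1}"
    using hedge_inj[of m k k] assms by (auto simp: inj_on_def)
  then show ?thesis by (simp add: E_class_eq_image card_image)
qed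

lemma hedge_in_E_class_iff:
  assumes "m \<ge> 2" "i \<in> {1..2*m}" "k \<in> {1..2*m}" "j \<in> {1..2*n+1}"
  shows "hedge m i j \<in> E_class n m k \<longleftrightarrow> i = k"
  using hedge_inj[OF assms(1,2,3)] assms(4) by (auto simp: E_class_def)

lemma vedge_notin_E_class: "n \<ge> 1 \<Longrightarrow> vedge n i j \<notin> E_class n m k"
  using hedge_neq_vedge unfolding E_class_def by (blast dest: sym)

lemma perfect_matching_parity_classes:
  assumes "m \<ge> 2"
  shows "perfect_matching (torus_vertices n m) (torus_edges n m)
           (\<Union>{E_class n m i | i. i \<in> {1..2*m} \<and> (odd i \<longleftrightarrow> b)})"
    (is "perfect_matching _ _ ?M")
  unfolding perfect_matching_def
proof (intro conjI ballI)
  show "?M \<subseteq> torus_edges n m"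
    by (auto simp: E_class_def torus_edges_def)
next
  fix v assume "v \<in> torus_vertices n m"
  then obtain i j where ij: "v = (i, j)" "i \<in> {1..2*m}" "j \<in> {1..2*n+1}"
    by (auto simp: torus_vertices_def)
  define p where "p = (if i = 1 then 2*m else i - 1)"
  have p: "p \<in> {1..2*m}" "cyc_succ (2*m) p = i" "(odd p \<longleftrightarrow> b) \<longleftrightarrow> \<not> (odd i \<longleftrightarrow> b)"
    using ij assms by (auto simp: p_def cyc_succ_def)
  \<comment> \<open>\<open>v\<close> is matched to its right neighbour if column \<open>i\<close> is selected, else to its left one.\<close>
  define w where "w = (if odd i \<longleftrightarrow> b then hedge m i j else hedge m p j)"
  have "w \<in> ?M"
    using ij p unfolding w_def E_class_def by (cases "odd i \<longleftrightarrow> b") auto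
  moreover have "v \<in> w" using ij p by (auto simp: w_def hedge_def)
  moreover have "e = w" if "e \<in> ?M" "v \<in> e" for e
  proof -
    obtain i' j' where e: "e = hedge m i' j'" "i' \<in> {1..2*m}" "odd i' \<longleftrightarrow> b"
      using \<open>e \<in> ?M\<close> by (auto simp: E_class_def)
    with \<open>v \<in> e\<close> ij have "j = j'" "i = i' \<or> i = cyc_succ (2*m) i'"
      by (auto simp: hedge_def)
    moreover have "i' = p" if "i = cyc_succ (2*m) i'"
      using that e(2) ij(2) assms by (auto simp: p_def cyc_succ_def split: if_splits)
    ultimately show ?thesis using e p(3) by (auto simp: w_def)
  qed
  ultimately show "\<exists>!e. e \<in> ?M \<and> v \<in> e" by blast
qed

lemma card_sym_diff:
  assumes "finite A" "finite B"
  shows "card A + card B = card ((A - B) \<union> (B - A)) + 2 * card (A \<inter> B)"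
proof -
  have "card ((A - B) \<union> (B - A)) = card (A - B) + card (B - A)"
    using assms by (intro card_Un_disjoint) auto
  then show ?thesis
    using card_Int_Diff[OF assms(1), of B] card_Int_Diff[OF assms(2), of A]
    by (simp add: Int_commute)
qed

lemma face_boundary_meets_E_class_evenly:
  assumes n: "n \<ge> 1" and m: "m \<ge> 2" and k: "k \<in> {1..2*m}" and F: "F \<in> torus_faces n m"
  shows "even (card (F \<inter> E_class n m k))"
proof -
  obtain i j where ij: "F = face_boundary n m i j" "i \<in> {1..2*m}" "j \<in> {1..2*n+1}"
    using F by (auto simp: torus_faces_def)
  define s where "s = cyc_succ (2*n+1) j"
  have s: "s \<in> {1..2*n+1}" "s \<noteq> j" using ij(3) n by (auto simp: s_def cyc_succ_def)
  have "F = {hedge m i j, vedge n (cyc_succ (2*m) i) j, hedge m i s, vedge n i j}"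
    by (simp add: ij(1) face_boundary_def s_def)
  moreover have "hedge m i j \<in> E_class n m k \<longleftrightarrow> i = k" "hedge m i s \<in> E_class n m k \<longleftrightarrow> i = k"
    using hedge_in_E_class_iff[OF m ij(2) k] ij(3) s(1) by auto
  ultimately have "F \<inter> E_class n m k = (if i = k then {hedge m k j, hedge m k s} else {})"
    using vedge_notin_E_class[OF n] by auto
  moreover have "hedge m k j \<noteq> hedge m k s" using hedge_inj[OF m k k] s(2) by auto
  ultimately show ?thesis by simp
qed

lemma total_resonance_adj_parity_E_class:
  assumes n: "n \<ge> 1" and m: "m \<ge> 2" and k: "k \<in> {1..2*m}"
    and adj: "total_resonance_adj n m M M'"
  shows "even (card (M \<inter> E_class n m k)) \<longleftrightarrow> even (card (M' \<inter> E_class n m k))"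
proof -
  obtain F where F: "F \<in> torus_faces n m" "(M - M') \<union> (M' - M) = F"
    using adj by (auto simp: total_resonance_adj_def)
  let ?E = "E_class n m k"
  have "((M \<inter> ?E) - (M' \<inter> ?E)) \<union> ((M' \<inter> ?E) - (M \<inter> ?E)) = F \<inter> ?E"
    using F(2) by blast
  then have "card (M \<inter> ?E) + card (M' \<inter> ?E) = card (F \<inter> ?E) + 2 * card (M \<inter> ?E \<inter> (M' \<inter> ?E))"
    using card_sym_diff[of "M \<inter> ?E" "M' \<inter> ?E"] finite_E_class by simp
  then show ?thesis using face_boundary_meets_E_class_evenly[OF n m k F(1)] by presburger
qed

lemma same_component_parity_E_class:
  assumes n: "n \<ge> 1" and m: "m \<ge> 2" and k: "k \<in> {1..2*m}"
    and "same_component n m M M'"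
  shows "even (card (M \<inter> E_class n m k)) \<longleftrightarrow> even (card (M' \<inter> E_class n m k))"
  using assms(4) unfolding same_component_def
proof (induction rule: rtrancl_induct)
  case (step M'' M')
  then show ?case using total_resonance_adj_parity_E_class[OF n m k, of M'' M'] by simp
qed simp

theorem lemma4p1:
  fixes n m :: nat
  assumes "n \<ge> 1" and "m \<ge> 2"
  defines "M1 \<equiv> \<Union>{E_class n m i | i. i \<in> {1..2*m} \<and> odd i}"
      and "M2 \<equiv> \<Union>{E_class n m i | i. i \<in> {1..2*m} \<and> even i}"
  shows "perfect_matching (torus_vertices n m) (torus_edges n m) M1 \<and>
         perfect_matching (torus_vertices n m) (torus_edges n m) M2 \<and>
         \<not> same_component n m M1 M2"
proof (intro conjI)
  show "perfect_matching (torus_vertices n m) (torus_edges n m) M1"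
    using perfect_matching_parity_classes[OF assms(2), of n True] by (simp add: M1_def)
  show "perfect_matching (torus_vertices n m) (torus_edges n m) M2"
    using perfect_matching_parity_classes[OF assms(2), of n False] by (simp add: M2_def)
  let ?E = "E_class n m 1"
  have one: "1 \<in> {1..2*m}" using assms(2) by simp
  have "?E \<in> {E_class n m i | i. i \<in> {1..2*m} \<and> odd i}" using one by force
  then have "M1 \<inter> ?E = ?E" unfolding M1_def by blast
  moreover have "M2 \<inter> ?E = {}"
  proof -
    have "e \<notin> ?E" if e: "e \<in> E_class n m i" and i: "i \<in> {1..2*m}" "even i" for e i
    proof -
      obtain j where "e = hedge m i j" "j \<in> {1..2*n+1}" using e by (auto simp: E_class_def)
      then show ?thesis using hedge_in_E_class_iff[OF assms(2) i(1) one] i(2) by auto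
    qed
    then show ?thesis unfolding M2_def by blast
  qed
  ultimately show "\<not> same_component n m M1 M2"
    using same_component_parity_E_class[OF assms(1,2) one, of M1 M2]
      card_E_class[OF assms(2) one] by auto
qed

end
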